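(* (i) The subalgebras $U_e^+$ and $U_e^-$ are invariant under $S_{e_0}$ and $\tilde S_{e_0}$; the subalgebras $U_f^+$ and $U_f^-$ are invariant under $S_{f_0}$ and $\tilde S_{f_0}$. (ii) For all $x\in U_e$: $P_e^\pm S_{e_0}(x)=S_{e_0}P_e^\pm(x)$ and $P_e^\pm\tilde S_{e_0}(x)=\tilde S_{e_0}P_e^\pm(x)$; for all $x\in U_f$: $P_f^\pm S_{f_0}(x)=S_{f_0}P_f^\pm(x)$ and $P_f^\pm\tilde S_{f_0}(x)=\tilde S_{f_0}P_f^\pm(x)$.
   Context: $U=U_q(\widehat{\mathfrak{sl}}_2)$ in the Drinfeld new realization with currents $e(z)=\sum e_nz^{-n}$, $f(z)=\sum f_nz^{-n}$, relations $(z-q^2w)e(z)e(w)=(q^2z-w)e(w)e(z)$, $(z-q^{-2}w)f(z)f(w)=(q^{-2}z-w)f(w)f(z)$, $k=\psi_0^+$ with $ke_nk^{-1}=q^2e_n$, $kf_nk^{-1}=q^{-2}f_n$; counit $\varepsilon(e_n)=\varepsilon(f_n)=0$, $\varepsilon(k)=1$; $q$ not a root of unity. $U_e$ ($U_f$) is the subalgebra generated by all $e_n$ (all $f_n$); $U_e^+$, $U_e^-$ are generated by $e_n$, $n\ge0$, resp. $n<0$; $U_f^+$, $U_f^-$ by $f_n$, $n>0$, resp. $n\le0$. Multiplication gives linear isomorphisms $U_e^-\otimes U_e^+\to U_e$ and $U_f^-\otimes U_f^+\to U_f$, and the projections are $P_e^-(a_1a_2)=a_1\varepsilon(a_2)$,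 $P_e^+(a_1a_2)=\varepsilon(a_1)a_2$ for $a_1\in U_e^-,a_2\in U_e^+$, and $P_f^-(a_1a_2)=a_1\varepsilon(a_2)$, $P_f^+(a_1a_2)=\varepsilon(a_1)a_2$ for $a_1\in U_f^-,a_2\in U_f^+$. Screenings: $S_{e_0}(x)=e_0x-kxk^{-1}e_0$, $S_{f_0}(x)=xf_0-f_0kxk^{-1}$, $\tilde S_{e_0}(x)=xe_0-e_0k^{-1}xk$, $\tilde S_{f_0}(x)=f_0x-k^{-1}xkf_0$. *)

theory Defs
  imports Main
begin

text \<open>An associative unital algebra over a field 'k is modelled as a ring 'a together
with a central unital ring homomorphism sc : 'k => 'a (scalar c acts as sc c * _).\<close>

definition scalar_embedding :: "('k::field \<Rightarrow> 'a::ring_1) \<Rightarrow> bool" where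
  "scalar_embedding sc \<longleftrightarrow>
     sc 0 = 0 \<and> sc 1 = 1 \<and> (\<forall>a b. sc (a + b) = sc a + sc b) \<and>
     (\<forall>a b. sc (a * b) = sc a * sc b) \<and> (\<forall>c x. sc c * x = x * sc c)"

inductive_set subalg :: "('k \<Rightarrow> 'a::ring_1) \<Rightarrow> 'a set \<Rightarrow> 'a set"
  for sc :: "'k \<Rightarrow> 'a" and G :: "'a set" where
  scal: "sc c \<in> subalg sc G"
| gen: "x \<in> G \<Longrightarrow> x \<in> subalg sc G"
| add: "x \<in> subalg sc G \<Longrightarrow> y \<in> subalg sc G \<Longrightarrow> x + y \<in> subalg sc G"
| mult: "x \<in> subalg sc G \<Longrightarrow> y \<in> subalg sc G \<Longrightarrow> x * y \<in> subalg sc G"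

definition lin_indep :: "('k::field \<Rightarrow> 'a::ring_1) \<Rightarrow> 'a list \<Rightarrow> bool" where
  "lin_indep sc as \<longleftrightarrow>
     (\<forall>cs. length cs = length as \<longrightarrow>
        (\<Sum>i<length as. sc (cs ! i) * as ! i) = 0 \<longrightarrow> (\<forall>i<length as. cs ! i = 0))"

text \<open>Multiplication gives a linear isomorphism A \<otimes> B \<rightarrow> C (A, B, C subspaces):
  surjectivity: every element of C is a finite sum of products a*b with a in A, b in B;
  injectivity: a sum of a_i*b_i with (a_i) linearly independent vanishes only if all b_i = 0;
  and the image lies in C.\<close>
definition mult_iso :: "('k::field \<Rightarrow> 'a::ring_1) \<Rightarrow> 'a set \<Rightarrow> 'a set \<Rightarrow> 'a set \<Rightarrow> bool" where
  "mult_iso sc A B C \<longleftrightarrow>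
     (\<forall>a\<in>A. \<forall>b\<in>B. a * b \<in> C) \<and>
     (\<forall>x\<in>C. \<exists>ps. set ps \<subseteq> A \<times> B \<and> x = sum_list (map (\<lambda>(a, b). a * b) ps)) \<and>
     (\<forall>ps. set ps \<subseteq> A \<times> B \<longrightarrow> lin_indep sc (map fst ps) \<longrightarrow>
        sum_list (map (\<lambda>(a, b). a * b) ps) = 0 \<longrightarrow> (\<forall>p\<in>set ps. snd p = 0))"

definition linear_on :: "('k::field \<Rightarrow> 'a::ring_1) \<Rightarrow> 'a set \<Rightarrow> ('a \<Rightarrow> 'a) \<Rightarrow> bool" where
  "linear_on sc C P \<longleftrightarrow>
     (\<forall>x\<in>C. \<forall>y\<in>C. P (x + y) = P x + P y) \<and> (\<forall>c. \<forall>x\<in>C. P (sc c * x) = sc c * P x)"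

text \<open>The defining data of U_q(sl2-hat) relevant to the statement: currents e, f
  (e n = e_n, f n = f_n), k = psi_0^+ with inverse kinv, counit eps.\<close>
definition Uq_data ::
  "('k::field_char_0 \<Rightarrow> 'a::ring_1) \<Rightarrow> 'k \<Rightarrow> (int \<Rightarrow> 'a) \<Rightarrow> (int \<Rightarrow> 'a) \<Rightarrow> 'a \<Rightarrow> 'a
     \<Rightarrow> ('a \<Rightarrow> 'k) \<Rightarrow> bool" where
  "Uq_data sc q e f k kinv eps \<longleftrightarrow>
     scalar_embedding sc \<and>
     q \<noteq> 0 \<and> (\<forall>n::nat. n > 0 \<longrightarrow> q ^ n \<noteq> 1) \<and>
     \<comment> \<open>(z - q^2 w) e(z) e(w) = (q^2 z - w) e(w) e(z), in modes\<close>
     (\<forall>m n. e (m + 1) * e n - sc (q^2) * e m * e (n + 1)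
            = sc (q^2) * e n * e (m + 1) - e (n + 1) * e m) \<and>
     \<comment> \<open>(z - q^-2 w) f(z) f(w) = (q^-2 z - w) f(w) f(z), in modes\<close>
     (\<forall>m n. f (m + 1) * f n - sc (inverse (q^2)) * f m * f (n + 1)
            = sc (inverse (q^2)) * f n * f (m + 1) - f (n + 1) * f m) \<and>
     k * kinv = 1 \<and> kinv * k = 1 \<and>
     (\<forall>n. k * e n * kinv = sc (q^2) * e n) \<and>
     (\<forall>n. k * f n * kinv = sc (inverse (q^2)) * f n) \<and>
     \<comment> \<open>counit: unital algebra homomorphism to the ground field\<close>
     (\<forall>c. eps (sc c) = c) \<and> (\<forall>x y. eps (x + y) = eps x + eps y) \<and>
     (\<forall>x y. eps (x * y) = eps x * eps y) \<and>
     (\<forall>n. eps (e n) = 0) \<and> (\<forall>n. eps (f n) = 0) \<and> eps k = 1"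

definition Ue :: "('k \<Rightarrow> 'a::ring_1) \<Rightarrow> (int \<Rightarrow> 'a) \<Rightarrow> 'a set" where
  "Ue sc e = subalg sc (range e)"
definition Ue_plus :: "('k \<Rightarrow> 'a::ring_1) \<Rightarrow> (int \<Rightarrow> 'a) \<Rightarrow> 'a set" where
  "Ue_plus sc e = subalg sc (e ` {n. n \<ge> 0})"
definition Ue_minus :: "('k \<Rightarrow> 'a::ring_1) \<Rightarrow> (int \<Rightarrow> 'a) \<Rightarrow> 'a set" where
  "Ue_minus sc e = subalg sc (e ` {n. n < 0})"
definition Uf :: "('k \<Rightarrow> 'a::ring_1) \<Rightarrow> (int \<Rightarrow> 'a) \<Rightarrow> 'a set" where
  "Uf sc f = subalg sc (range f)"
definition Uf_plus :: "('k \<Rightarrow> 'a::ring_1) \<Rightarrow> (int \<Rightarrow> 'a) \<Rightarrow> 'a set" where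
  "Uf_plus sc f = subalg sc (f ` {n. n > 0})"
definition Uf_minus :: "('k \<Rightarrow> 'a::ring_1) \<Rightarrow> (int \<Rightarrow> 'a) \<Rightarrow> 'a set" where
  "Uf_minus sc f = subalg sc (f ` {n. n \<le> 0})"

definition S_e0 :: "(int \<Rightarrow> 'a::ring_1) \<Rightarrow> 'a \<Rightarrow> 'a \<Rightarrow> 'a \<Rightarrow> 'a" where
  "S_e0 e k kinv x = e 0 * x - (k * x * kinv) * e 0"
definition S_f0 :: "(int \<Rightarrow> 'a::ring_1) \<Rightarrow> 'a \<Rightarrow> 'a \<Rightarrow> 'a \<Rightarrow> 'a" where
  "S_f0 f k kinv x = x * f 0 - f 0 * (k * x * kinv)"
definition tS_e0 :: "(int \<Rightarrow> 'a::ring_1) \<Rightarrow> 'a \<Rightarrow> 'a \<Rightarrow> 'a \<Rightarrow> 'a" where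
  "tS_e0 e k kinv x = x * e 0 - e 0 * (kinv * x * k)"
definition tS_f0 :: "(int \<Rightarrow> 'a::ring_1) \<Rightarrow> 'a \<Rightarrow> 'a \<Rightarrow> 'a \<Rightarrow> 'a" where
  "tS_f0 f k kinv x = f 0 * x - (kinv * x * k) * f 0"

definition is_proj_minus ::
  "('k::field \<Rightarrow> 'a::ring_1) \<Rightarrow> ('a \<Rightarrow> 'k) \<Rightarrow> 'a set \<Rightarrow> 'a set \<Rightarrow> 'a set \<Rightarrow> ('a \<Rightarrow> 'a) \<Rightarrow> bool" where
  "is_proj_minus sc eps Am Ap C P \<longleftrightarrow> linear_on sc C P \<and>
     (\<forall>a1\<in>Am. \<forall>a2\<in>Ap. P (a1 * a2) = a1 * sc (eps a2))"
definition is_proj_plus ::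
  "('k::field \<Rightarrow> 'a::ring_1) \<Rightarrow> ('a \<Rightarrow> 'k) \<Rightarrow> 'a set \<Rightarrow> 'a set \<Rightarrow> 'a set \<Rightarrow> ('a \<Rightarrow> 'a) \<Rightarrow> bool" where
  "is_proj_plus sc eps Am Ap C P \<longleftrightarrow> linear_on sc C P \<and>
     (\<forall>a1\<in>Am. \<forall>a2\<in>Ap. P (a1 * a2) = sc (eps a1) * a2)"

end

(*
  Each screening operator is a twisted derivation D(xy) = sigma(x) D(y) + D(x) tau(y) whose
  twists are the identity and conjugation by k or k^-1; indeed tS_e0 and tS_f0 are S_f0 and
  S_e0 with k and k^-1 exchanged. Conjugation by k only rescales the modes e_n and f_n, so a
  screening preserves a subalgebra generated by modes once it maps those modes into it. On a
  mode a_n it gives, up to a scalar, the q-commutator a_0 a_n - c a_n a_0. This lies in U_e^+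
  and U_f^-, which contain the zero mode; for U_e^- and U_f^+ the exchange relation at m = -1,
  resp. n = 0, rewrites it through modes of the right sign, except at the boundary mode, where
  it says that the q-commutator is its own negative and hence zero (characteristic 0).
  For the projections write x as a sum of products a b with a in U^-, b in U^+. The counit
  kills every screening and is invariant under the twists, so P^-(D(ab)) and D(P^-(ab)) both
  equal D(a) eps(b), and P^+(D(ab)) and D(P^+(ab)) both equal eps(a) D(b); additivity does the rest.
*)

theory Submission
  imports Defs
begin

section \<open>Scalars and subalgebras\<close>

lemma scalar_embeddingD:
  assumes "scalar_embedding sc"
  shows "sc 0 = 0" "sc 1 = 1" "sc (a + b) = sc a + sc b" "sc (a * b) = sc a * sc b"
    "sc c * x = x * sc c"
  using assms unfolding scalar_embedding_def by blast+

lemma scalar_embedding_minus: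
  assumes "scalar_embedding sc"
  shows "sc (- c) = - sc c"
  using scalar_embeddingD(3)[OF assms, of c "- c"] scalar_embeddingD(1)[OF assms]
  by (simp add: add_eq_0_iff)

lemma scalar_embedding_inverse:
  assumes "scalar_embedding sc" and "c \<noteq> 0"
  shows "sc (inverse c) * sc c = 1"
  using scalar_embeddingD(4)[OF assms(1), of "inverse c" c] scalar_embeddingD(2)[OF assms(1)] assms(2)
  by simp

lemma scalar_embedding_double_eq_0:
  fixes sc :: "'k::field_char_0 \<Rightarrow> 'a::ring_1" and x :: 'a
  assumes "scalar_embedding sc" and "x + x = 0"
  shows "x = 0"
proof -
  have "x = (sc (inverse 2) + sc (inverse 2)) * x"
    using scalar_embeddingD(3)[OF assms(1), of "inverse 2" "inverse 2"] scalar_embeddingD(2)[OF assms(1)]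
    by simp
  also have "\<dots> = sc (inverse 2) * (x + x)"
    by (simp add: algebra_simps)
  finally show ?thesis
    using assms(2) by simp
qed

lemma conj_scalar:
  assumes "scalar_embedding sc" and "u * v = 1"
  shows "u * sc c * v = sc c"
  by (metis assms mult.assoc mult_1_right scalar_embeddingD(5))

lemma conj_eigen_inverse:
  assumes se: "scalar_embedding sc" and "u * v = 1" "v * u = 1"
    and eigen: "u * x * v = sc c * x" and "c \<noteq> 0"
  shows "v * x * u = sc (inverse c) * x"
proof -
  have v_sc: "v * sc (inverse c) = sc (inverse c) * v"
    by (rule scalar_embeddingD(5)[OF se, symmetric])
  have "v * x * u = v * (sc (inverse c) * (sc c * x)) * u"
    using scalar_embedding_inverse[OF se \<open>c \<noteq> 0\<close>] by (simp add: mult.assoc[symmetric])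
  also have "\<dots> = sc (inverse c) * ((v * u) * x * (v * u))"
    by (simp add: eigen[symmetric] mult.assoc[symmetric] v_sc)
  finally show ?thesis
    using \<open>v * u = 1\<close> by simp
qed

lemma subalg_zero: "scalar_embedding sc \<Longrightarrow> 0 \<in> subalg sc G"
  by (metis scalar_embeddingD(1) subalg.scal)

lemma subalg_scale: "x \<in> subalg sc G \<Longrightarrow> sc c * x \<in> subalg sc G"
  by (rule subalg.mult[OF subalg.scal])

lemma subalg_uminus:
  assumes "scalar_embedding sc" and "x \<in> subalg sc G"
  shows "- x \<in> subalg sc G"
  using subalg_scale[OF assms(2), of "- 1"] scalar_embedding_minus[OF assms(1)]
  by (simp add: scalar_embeddingD(2)[OF assms(1)])

lemma subalg_diff:
  assumes "scalar_embedding sc" and "x \<in> subalg sc G" "y \<in> subalg sc G"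
  shows "x - y \<in> subalg sc G"
  using subalg.add[OF assms(2) subalg_uminus[OF assms(1,3)]] by simp

lemma subalg_q_commutator:
  assumes "scalar_embedding sc" and "x \<in> subalg sc G" "y \<in> subalg sc G"
  shows "x * y - sc c * y * x \<in> subalg sc G"
  using assms by (simp add: subalg_diff subalg.mult subalg_scale)

lemma subalg_conj_closed:
  assumes se: "scalar_embedding sc" and "u * v = 1" "v * u = 1"
    and eigen: "\<And>n. u * g n * v = sc c * g n"
    and "x \<in> subalg sc (g ` N)"
  shows "u * x * v \<in> subalg sc (g ` N)"
  using \<open>x \<in> subalg sc (g ` N)\<close>
proof (induction x rule: subalg.induct)
  case (scal c)
  then show ?case
    using conj_scalar[OF se \<open>u * v = 1\<close>] by (simp add: subalg.scal)
next
  case (gen x)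
  then obtain n where "n \<in> N" "x = g n"
    by blast
  then show ?case
    using eigen by (metis image_eqI subalg.gen subalg_scale)
next
  case (add x y)
  then show ?case
    by (simp add: algebra_simps subalg.add)
next
  case (mult x y)
  have "(u * x * v) * (u * y * v) = u * x * (v * u) * y * v"
    by (simp add: mult.assoc)
  then have "u * (x * y) * v = (u * x * v) * (u * y * v)"
    using \<open>v * u = 1\<close> by (simp add: mult.assoc)
  then show ?case
    using mult by (simp add: subalg.mult)
qed

section \<open>Twisted derivations\<close>

definition twisted_derivation ::
  "('k \<Rightarrow> 'a::ring_1) \<Rightarrow> ('a \<Rightarrow> 'a) \<Rightarrow> ('a \<Rightarrow> 'a) \<Rightarrow> ('a \<Rightarrow> 'a) \<Rightarrow> bool" where
  "twisted_derivation sc \<sigma> \<tau> D \<longleftrightarrow>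
     (\<forall>c. D (sc c) = 0) \<and> (\<forall>x y. D (x + y) = D x + D y) \<and>
     (\<forall>x y. D (x * y) = \<sigma> x * D y + D x * \<tau> y)"

lemma twisted_derivationD:
  assumes "twisted_derivation sc \<sigma> \<tau> D"
  shows "D (sc c) = 0" "D (x + y) = D x + D y" "D (x * y) = \<sigma> x * D y + D x * \<tau> y"
  using assms unfolding twisted_derivation_def by blast+

lemma twisted_derivation_S_e0:
  assumes se: "scalar_embedding sc" and "u * v = 1" "v * u = 1"
  shows "twisted_derivation sc (\<lambda>x. u * x * v) id (S_e0 g u v)"
proof -
  have "u * x * v * (g 0 * y - u * y * v * g 0) + (g 0 * x - u * x * v * g 0) * y
      = g 0 * (x * y) - u * x * (v * u) * y * v * g 0" for x y
    by (simp add: algebra_simps)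
  then show ?thesis
    unfolding twisted_derivation_def S_e0_def
    using conj_scalar[OF se \<open>u * v = 1\<close>] \<open>v * u = 1\<close> scalar_embeddingD(5)[OF se]
    by (simp add: algebra_simps)
qed

lemma twisted_derivation_S_f0:
  assumes se: "scalar_embedding sc" and "u * v = 1" "v * u = 1"
  shows "twisted_derivation sc id (\<lambda>x. u * x * v) (S_f0 g u v)"
proof -
  have "x * (y * g 0 - g 0 * (u * y * v)) + (x * g 0 - g 0 * (u * x * v)) * (u * y * v)
      = x * y * g 0 - g 0 * (u * x * (v * u) * y * v)" for x y
    by (simp add: algebra_simps)
  then show ?thesis
    unfolding twisted_derivation_def S_f0_def
    using conj_scalar[OF se \<open>u * v = 1\<close>] \<open>v * u = 1\<close> scalar_embeddingD(5)[OF se]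
    by (simp add: algebra_simps)
qed

lemma tS_e0_eq_S_f0: "tS_e0 e k kinv = S_f0 e kinv k"
  by (simp add: fun_eq_iff tS_e0_def S_f0_def)

lemma tS_f0_eq_S_e0: "tS_f0 f k kinv = S_e0 f kinv k"
  by (simp add: fun_eq_iff tS_f0_def S_e0_def)

lemma subalg_twisted_derivation_closed:
  assumes se: "scalar_embedding sc" and D: "twisted_derivation sc \<sigma> \<tau> D"
    and \<sigma>: "\<And>x. x \<in> subalg sc G \<Longrightarrow> \<sigma> x \<in> subalg sc G"
    and \<tau>: "\<And>x. x \<in> subalg sc G \<Longrightarrow> \<tau> x \<in> subalg sc G"
    and D_gen: "\<And>g. g \<in> G \<Longrightarrow> D g \<in> subalg sc G"
    and "x \<in> subalg sc G"
  shows "D x \<in> subalg sc G"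
  using \<open>x \<in> subalg sc G\<close>
proof (induction x rule: subalg.induct)
  case (scal c)
  then show ?case
    using twisted_derivationD(1)[OF D] subalg_zero[OF se] by simp
next
  case (gen x)
  then show ?case by (rule D_gen)
next
  case (add x y)
  then show ?case
    by (simp add: twisted_derivationD(2)[OF D] subalg.add)
next
  case (mult x y)
  then show ?case
    unfolding twisted_derivationD(3)[OF D] by (intro subalg.add subalg.mult \<sigma> \<tau>)
qed

lemma screenings_preserve_subalg:
  assumes se: "scalar_embedding sc" and uv: "u * v = 1" and vu: "v * u = 1" and "c \<noteq> 0"
    and eigen: "\<And>n. u * g n * v = sc c * g n"
    and comm: "\<And>n. n \<in> N \<Longrightarrow> g 0 * g n - sc c * g n * g 0 \<in> subalg sc (g ` N)"
  shows "\<forall>x\<in>subalg sc (g ` N). S_e0 g u v x \<in> subalg sc (g ` N) \<and> S_f0 g v u x \<in> subalg sc (g ` N)"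
proof (intro ballI conjI)
  fix x assume x: "x \<in> subalg sc (g ` N)"
  have eigen': "v * g n * u = sc (inverse c) * g n" for n
    by (rule conj_eigen_inverse[OF se uv vu eigen \<open>c \<noteq> 0\<close>])
  have conj_uv: "u * y * v \<in> subalg sc (g ` N)" and conj_vu: "v * y * u \<in> subalg sc (g ` N)"
    if "y \<in> subalg sc (g ` N)" for y
    using subalg_conj_closed[OF se uv vu eigen that] subalg_conj_closed[OF se vu uv eigen' that]
    by auto
  show "S_e0 g u v x \<in> subalg sc (g ` N)"
  proof (rule subalg_twisted_derivation_closed[OF se twisted_derivation_S_e0[OF se uv vu] conj_uv _ _ x])
    fix y assume "y \<in> g ` N"
    then show "S_e0 g u v y \<in> subalg sc (g ` N)"
      using comm eigen by (auto simp: S_e0_def)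
  qed auto
  show "S_f0 g v u x \<in> subalg sc (g ` N)"
  proof (rule subalg_twisted_derivation_closed[OF se twisted_derivation_S_f0[OF se vu uv] _ conj_vu _ x])
    fix y assume "y \<in> g ` N"
    then obtain n where n: "n \<in> N" and y: "y = g n"
      by blast
    have inv: "sc (inverse c) * (sc c * z) = z" for z
      using scalar_embedding_inverse[OF se \<open>c \<noteq> 0\<close>] by (simp add: mult.assoc[symmetric])
    have g0_sc: "g 0 * (sc (inverse c) * z) = sc (inverse c) * (g 0 * z)" for z
      by (metis mult.assoc scalar_embeddingD(5)[OF se])
    have "S_f0 g v u y = - (sc (inverse c) * (g 0 * g n - sc c * g n * g 0))"
      unfolding S_f0_def y eigen'
      by (simp add: algebra_simps inv g0_sc)
    then show "S_f0 g v u y \<in> subalg sc (g ` N)"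
      using comm[OF n] by (simp add: subalg_uminus[OF se] subalg_scale)
  qed auto
qed

section \<open>Exchange relations\<close>

lemma exchange_commutator_negative:
  fixes sc :: "'k::field_char_0 \<Rightarrow> 'a::ring_1" and g :: "int \<Rightarrow> 'a"
  assumes se: "scalar_embedding sc"
    and rel: "\<And>m n. g (m + 1) * g n - sc Q * g m * g (n + 1) = sc Q * g n * g (m + 1) - g (n + 1) * g m"
    and "n < 0"
  shows "g 0 * g n - sc Q * g n * g 0 \<in> subalg sc (g ` {n. n < 0})"
proof -
  define X where "X = g 0 * g n - sc Q * g n * g 0"
  have X_eq: "X = sc Q * g (- 1) * g (n + 1) - g (n + 1) * g (- 1)"
    using rel[of "- 1" n] unfolding X_def by (simp add: algebra_simps)
  show ?thesis
  proof (cases "n = - 1")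
    case True
    have "- X = sc Q * g (- 1) * g 0 - g 0 * g (- 1)"
      unfolding X_def True by simp
    then have "X + X = 0"
      using X_eq True by (metis add.left_inverse add.commute)
    then show ?thesis
      using scalar_embedding_double_eq_0[OF se] subalg_zero[OF se] unfolding X_def by metis
  next
    case False
    with \<open>n < 0\<close> have "n + 1 < 0"
      by simp
    then show ?thesis
      unfolding X_def[symmetric] X_eq
      by (intro subalg_diff[OF se] subalg.mult subalg_scale subalg.gen) auto
  qed
qed

lemma exchange_commutator_positive:
  fixes sc :: "'k::field_char_0 \<Rightarrow> 'a::ring_1" and g :: "int \<Rightarrow> 'a"
  assumes se: "scalar_embedding sc"
    and rel: "\<And>m n. g (m + 1) * g n - sc Q * g m * g (n + 1) = sc Q * g n * g (m + 1) - g (n + 1) * g m"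
    and "Q \<noteq> 0" and "n > 0"
  shows "g 0 * g n - sc (inverse Q) * g n * g 0 \<in> subalg sc (g ` {n. n > 0})"
proof -
  define Y where "Y = g 0 * g n - sc (inverse Q) * g n * g 0"
  have inv: "sc Q * (sc (inverse Q) * z) = z" for z
    using scalar_embedding_inverse[OF se, of "inverse Q"] \<open>Q \<noteq> 0\<close>
    by (simp add: mult.assoc[symmetric])
  have Y_inv: "Y = sc (inverse Q) * (sc Q * Y)"
    using scalar_embedding_inverse[OF se \<open>Q \<noteq> 0\<close>] by (simp add: mult.assoc[symmetric])
  have QY_eq: "sc Q * Y = g 1 * g (n - 1) - sc Q * g (n - 1) * g 1"
    using rel[of "n - 1" 0] unfolding Y_def by (simp add: algebra_simps inv)
  show ?thesis
  proof (cases "n = 1")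
    case True
    have "- (sc Q * Y) = g 1 * g 0 - sc Q * g 0 * g 1"
      unfolding Y_def True by (simp add: algebra_simps inv)
    then have "sc Q * Y + sc Q * Y = 0"
      using QY_eq True by (metis add.left_inverse add.commute diff_self)
    then have "Y = 0"
      using Y_inv scalar_embedding_double_eq_0[OF se] by (metis mult_zero_right)
    then show ?thesis
      using subalg_zero[OF se] unfolding Y_def by simp
  next
    case False
    with \<open>n > 0\<close> have "n - 1 > 0"
      by simp
    then have "sc Q * Y \<in> subalg sc (g ` {n. n > 0})"
      unfolding QY_eq by (intro subalg_diff[OF se] subalg.mult subalg_scale subalg.gen) auto
    then show ?thesis
      unfolding Y_def[symmetric] by (subst Y_inv) (rule subalg_scale)
  qed
qed

section \<open>Characters and projections\<close>

definition algebra_character :: "('k::field \<Rightarrow> 'a::ring_1) \<Rightarrow> ('a \<Rightarrow> 'k) \<Rightarrow> bool" where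
  "algebra_character sc eps \<longleftrightarrow>
     (\<forall>c. eps (sc c) = c) \<and> (\<forall>x y. eps (x + y) = eps x + eps y) \<and>
     (\<forall>x y. eps (x * y) = eps x * eps y)"

lemma algebra_characterD:
  assumes "algebra_character sc eps"
  shows "eps (sc c) = c" "eps (x + y) = eps x + eps y" "eps (x * y) = eps x * eps y"
  using assms unfolding algebra_character_def by blast+

lemma algebra_character_diff:
  assumes "algebra_character sc eps"
  shows "eps (x - y) = eps x - eps y"
  using algebra_characterD(2)[OF assms, of "x - y" y] by simp

lemma algebra_character_conj:
  assumes se: "scalar_embedding sc" and eps: "algebra_character sc eps" and "u * v = 1"
  shows "eps (u * x * v) = eps x"
proof -
  have "eps u * eps v = 1"
    using \<open>u * v = 1\<close> algebra_characterD(1,3)[OF eps] scalar_embeddingD(2)[OF se]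
    by metis
  then show ?thesis
    by (simp add: algebra_characterD(3)[OF eps] mult.commute mult.left_commute)
qed

lemma algebra_character_S_e0:
  assumes "algebra_character sc eps" and "eps (g 0) = 0"
  shows "eps (S_e0 g u v x) = 0"
  using assms by (simp add: S_e0_def algebra_character_diff algebra_characterD(3))

lemma algebra_character_S_f0:
  assumes "algebra_character sc eps" and "eps (g 0) = 0"
  shows "eps (S_f0 g u v x) = 0"
  using assms by (simp add: S_f0_def algebra_character_diff algebra_characterD(3))

lemma sum_list_additive_on:
  fixes F :: "'a::monoid_add \<Rightarrow> 'b::group_add"
  assumes "0 \<in> C" and C_add: "\<And>x y. x \<in> C \<Longrightarrow> y \<in> C \<Longrightarrow> x + y \<in> C"
    and F_add: "\<And>x y. x \<in> C \<Longrightarrow> y \<in> C \<Longrightarrow> F (x + y) = F x + F y"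
    and "set xs \<subseteq> C"
  shows "F (sum_list xs) = sum_list (map F xs)"
proof -
  have "F 0 = 0"
    using F_add[OF \<open>0 \<in> C\<close> \<open>0 \<in> C\<close>] by (metis add_0_right add_left_cancel)
  have "F (sum_list xs) = sum_list (map F xs) \<and> sum_list xs \<in> C"
    using \<open>set xs \<subseteq> C\<close>
    by (induction xs) (simp_all add: \<open>F 0 = 0\<close> \<open>0 \<in> C\<close> C_add F_add)
  then show ?thesis ..
qed

lemma commute_on_span_of_products:
  fixes P D :: "'a::ring_1 \<Rightarrow> 'a"
  assumes se: "scalar_embedding sc"
    and span: "\<forall>x\<in>subalg sc G. \<exists>ps. set ps \<subseteq> A \<times> B \<and> x = sum_list (map (\<lambda>(a, b). a * b) ps)"
    and P: "linear_on sc (subalg sc G) P"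
    and D_add: "\<And>x y. D (x + y) = D x + D y"
    and prod: "\<And>a b. a \<in> A \<Longrightarrow> b \<in> B \<Longrightarrow>
      a * b \<in> subalg sc G \<and> D (a * b) \<in> subalg sc G \<and> P (D (a * b)) = D (P (a * b))"
    and x: "x \<in> subalg sc G"
  shows "P (D x) = D (P x)"
proof -
  obtain ps where ps: "set ps \<subseteq> A \<times> B" and x_eq: "x = sum_list (map (\<lambda>(a, b). a * b) ps)"
    using span x by blast
  define zs where "zs = map (\<lambda>(a, b). a * b) ps"
  have zs: "set zs \<subseteq> subalg sc G" and D_zs: "set (map D zs) \<subseteq> subalg sc G"
    and PD_zs: "map (P \<circ> D) zs = map (D \<circ> P) zs"
    using ps prod unfolding zs_def by auto
  have P_sum: "P (sum_list ys) = sum_list (map P ys)" if "set ys \<subseteq> subalg sc G" for ys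
    using sum_list_additive_on[OF subalg_zero[OF se] subalg.add _ that] P
    unfolding linear_on_def by blast
  have D_sum: "D (sum_list ys) = sum_list (map D ys)" for ys
    using sum_list_additive_on[of UNIV] D_add by blast
  have "P (D x) = sum_list (map (P \<circ> D) zs)"
    using P_sum[OF D_zs] by (simp add: x_eq zs_def[symmetric] D_sum)
  also have "\<dots> = D (P x)"
    using P_sum[OF zs] by (simp add: PD_zs x_eq zs_def[symmetric] D_sum)
  finally show ?thesis .
qed

lemma proj_minus_commutes_twisted_derivation:
  assumes se: "scalar_embedding sc"
    and iso: "mult_iso sc A B (subalg sc G)"
    and P: "is_proj_minus sc eps A B (subalg sc G) P"
    and D: "twisted_derivation sc \<sigma> \<tau> D"
    and \<tau>_sc: "\<And>c. \<tau> (sc c) = sc c" and eps_\<tau>: "\<And>x. eps (\<tau> x) = eps x"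
    and eps_D: "\<And>x. eps (D x) = 0"
    and \<sigma>_A: "\<And>a. a \<in> A \<Longrightarrow> \<sigma> a \<in> A" and D_A: "\<And>a. a \<in> A \<Longrightarrow> D a \<in> A"
    and \<tau>_B: "\<And>b. b \<in> B \<Longrightarrow> \<tau> b \<in> B" and D_B: "\<And>b. b \<in> B \<Longrightarrow> D b \<in> B"
    and x: "x \<in> subalg sc G"
  shows "P (D x) = D (P x)"
proof (rule commute_on_span_of_products[OF se _ _ twisted_derivationD(2)[OF D] _ x])
  have AB: "\<And>a b. a \<in> A \<Longrightarrow> b \<in> B \<Longrightarrow> a * b \<in> subalg sc G"
    using iso unfolding mult_iso_def by blast
  have P_add: "\<And>y z. y \<in> subalg sc G \<Longrightarrow> z \<in> subalg sc G \<Longrightarrow> P (y + z) = P y + P z"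
    and P_prod: "\<And>a b. a \<in> A \<Longrightarrow> b \<in> B \<Longrightarrow> P (a * b) = a * sc (eps b)"
    using P unfolding is_proj_minus_def linear_on_def by blast+
  fix a b assume a: "a \<in> A" and b: "b \<in> B"
  have "P (D (a * b)) = P (\<sigma> a * D b) + P (D a * \<tau> b)"
    using AB \<sigma>_A D_A \<tau>_B D_B a b by (simp add: twisted_derivationD(3)[OF D] P_add)
  also have "\<dots> = D a * sc (eps b)"
    using \<sigma>_A D_A \<tau>_B D_B a b
    by (simp add: P_prod eps_D eps_\<tau> scalar_embeddingD(1)[OF se])
  also have "\<dots> = D (P (a * b))"
    by (simp add: P_prod a b twisted_derivationD(1,3)[OF D] \<tau>_sc)
  finally show "a * b \<in> subalg sc G \<and> D (a * b) \<in> subalg sc G \<and> P (D (a * b)) = D (P (a * b))"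
    using AB \<sigma>_A D_A \<tau>_B D_B a b by (simp add: twisted_derivationD(3)[OF D] subalg.add)
qed (use iso P in \<open>auto simp: mult_iso_def is_proj_minus_def\<close>)

lemma proj_plus_commutes_twisted_derivation:
  assumes se: "scalar_embedding sc"
    and iso: "mult_iso sc A B (subalg sc G)"
    and P: "is_proj_plus sc eps A B (subalg sc G) P"
    and D: "twisted_derivation sc \<sigma> \<tau> D"
    and \<sigma>_sc: "\<And>c. \<sigma> (sc c) = sc c" and eps_\<sigma>: "\<And>x. eps (\<sigma> x) = eps x"
    and eps_D: "\<And>x. eps (D x) = 0"
    and \<sigma>_A: "\<And>a. a \<in> A \<Longrightarrow> \<sigma> a \<in> A" and D_A: "\<And>a. a \<in> A \<Longrightarrow> D a \<in> A"
    and \<tau>_B: "\<And>b. b \<in> B \<Longrightarrow> \<tau> b \<in> B" and D_B: "\<And>b. b \<in> B \<Longrightarrow> D b \<in> B"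
    and x: "x \<in> subalg sc G"
  shows "P (D x) = D (P x)"
proof (rule commute_on_span_of_products[OF se _ _ twisted_derivationD(2)[OF D] _ x])
  have AB: "\<And>a b. a \<in> A \<Longrightarrow> b \<in> B \<Longrightarrow> a * b \<in> subalg sc G"
    using iso unfolding mult_iso_def by blast
  have P_add: "\<And>y z. y \<in> subalg sc G \<Longrightarrow> z \<in> subalg sc G \<Longrightarrow> P (y + z) = P y + P z"
    and P_prod: "\<And>a b. a \<in> A \<Longrightarrow> b \<in> B \<Longrightarrow> P (a * b) = sc (eps a) * b"
    using P unfolding is_proj_plus_def linear_on_def by blast+
  fix a b assume a: "a \<in> A" and b: "b \<in> B"
  have "P (D (a * b)) = P (\<sigma> a * D b) + P (D a * \<tau> b)"
    using AB \<sigma>_A D_A \<tau>_B D_B a b by (simp add: twisted_derivationD(3)[OF D] P_add)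
  also have "\<dots> = sc (eps a) * D b"
    using \<sigma>_A D_A \<tau>_B D_B a b
    by (simp add: P_prod eps_D eps_\<sigma> scalar_embeddingD(1)[OF se])
  also have "\<dots> = D (P (a * b))"
    by (simp add: P_prod a b twisted_derivationD(1,3)[OF D] \<sigma>_sc)
  finally show "a * b \<in> subalg sc G \<and> D (a * b) \<in> subalg sc G \<and> P (D (a * b)) = D (P (a * b))"
    using AB \<sigma>_A D_A \<tau>_B D_B a b by (simp add: twisted_derivationD(3)[OF D] subalg.add)
qed (use iso P in \<open>auto simp: mult_iso_def is_proj_plus_def\<close>)

lemma screenings_commute_with_projections:
  assumes se: "scalar_embedding sc" and eps: "algebra_character sc eps"
    and uv: "u * v = 1" and vu: "v * u = 1" and "eps (g 0) = 0"
    and iso: "mult_iso sc A B (subalg sc G)"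
    and Pm: "is_proj_minus sc eps A B (subalg sc G) Pm"
    and Pp: "is_proj_plus sc eps A B (subalg sc G) Pp"
    and conj_A: "\<And>a. a \<in> A \<Longrightarrow> u * a * v \<in> A"
    and conj_B: "\<And>b. b \<in> B \<Longrightarrow> v * b * u \<in> B"
    and S_A: "\<forall>a\<in>A. S_e0 g u v a \<in> A \<and> S_f0 g v u a \<in> A"
    and S_B: "\<forall>b\<in>B. S_e0 g u v b \<in> B \<and> S_f0 g v u b \<in> B"
  shows "\<forall>x\<in>subalg sc G.
    Pm (S_e0 g u v x) = S_e0 g u v (Pm x) \<and> Pp (S_e0 g u v x) = S_e0 g u v (Pp x) \<and>
    Pm (S_f0 g v u x) = S_f0 g v u (Pm x) \<and> Pp (S_f0 g v u x) = S_f0 g v u (Pp x)"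
proof (intro ballI conjI)
  fix x assume x: "x \<in> subalg sc G"
  note D_e = twisted_derivation_S_e0[OF se uv vu, of g]
    and eps_D_e = algebra_character_S_e0[where g = g, OF eps \<open>eps (g 0) = 0\<close>]
  note D_f = twisted_derivation_S_f0[OF se vu uv, of g]
    and eps_D_f = algebra_character_S_f0[where g = g, OF eps \<open>eps (g 0) = 0\<close>]
  show "Pm (S_e0 g u v x) = S_e0 g u v (Pm x)"
    by (rule proj_minus_commutes_twisted_derivation[OF se iso Pm D_e _ _ eps_D_e conj_A _ _ _ x])
      (simp_all add: S_A S_B)
  show "Pp (S_e0 g u v x) = S_e0 g u v (Pp x)"
    by (rule proj_plus_commutes_twisted_derivation[OF se iso Pp D_e _ _ eps_D_e conj_A _ _ _ x])
      (simp_all add: S_A S_B conj_scalar[OF se uv] algebra_character_conj[OF se eps uv])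
  show "Pm (S_f0 g v u x) = S_f0 g v u (Pm x)"
    by (rule proj_minus_commutes_twisted_derivation[OF se iso Pm D_f _ _ eps_D_f _ _ conj_B _ x])
      (simp_all add: S_A S_B conj_scalar[OF se vu] algebra_character_conj[OF se eps vu])
  show "Pp (S_f0 g v u x) = S_f0 g v u (Pp x)"
    by (rule proj_plus_commutes_twisted_derivation[OF se iso Pp D_f _ _ eps_D_f _ _ conj_B _ x])
      (simp_all add: S_A S_B)
qed

section \<open>Screenings of the quantum affine algebra\<close>

locale Uq_screening =
  fixes sc :: "'k::field_char_0 \<Rightarrow> 'a::ring_1" and q :: 'k and e f :: "int \<Rightarrow> 'a"
    and k kinv :: 'a and eps :: "'a \<Rightarrow> 'k"
  assumes Uq_data: "Uq_data sc q e f k kinv eps"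
begin

lemma scalar_embedding: "scalar_embedding sc"
  and character: "algebra_character sc eps"
  and q2_nonzero: "q ^ 2 \<noteq> 0"
  and k_kinv: "k * kinv = 1" and kinv_k: "kinv * k = 1"
  and eps_e0: "eps (e 0) = 0" and eps_f0: "eps (f 0) = 0"
  and e_exchange:
    "e (m + 1) * e n - sc (q ^ 2) * e m * e (n + 1) = sc (q ^ 2) * e n * e (m + 1) - e (n + 1) * e m"
  and f_exchange:
    "f (m + 1) * f n - sc (inverse (q ^ 2)) * f m * f (n + 1)
       = sc (inverse (q ^ 2)) * f n * f (m + 1) - f (n + 1) * f m"
  and conj_e: "k * e n * kinv = sc (q ^ 2) * e n"
  and conj_f: "k * f n * kinv = sc (inverse (q ^ 2)) * f n"
  using Uq_data unfolding Uq_data_def algebra_character_def by simp_all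

lemma conj_inverse_e: "kinv * e n * k = sc (inverse (q ^ 2)) * e n"
  by (rule conj_eigen_inverse[OF scalar_embedding k_kinv kinv_k conj_e q2_nonzero])

lemma conj_inverse_f: "kinv * f n * k = sc (q ^ 2) * f n"
  using conj_eigen_inverse[OF scalar_embedding k_kinv kinv_k conj_f] q2_nonzero by simp

lemmas screenings_preserve_subalg_e =
  screenings_preserve_subalg[where g = e, OF scalar_embedding k_kinv kinv_k q2_nonzero conj_e]

lemmas screenings_preserve_subalg_f =
  screenings_preserve_subalg[where g = f, OF scalar_embedding kinv_k k_kinv q2_nonzero conj_inverse_f]

lemma screenings_preserve_Ue_plus:
  "\<forall>x\<in>Ue_plus sc e. S_e0 e k kinv x \<in> Ue_plus sc e \<and> tS_e0 e k kinv x \<in> Ue_plus sc e"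
  unfolding tS_e0_eq_S_f0 Ue_plus_def
  by (rule screenings_preserve_subalg_e) (intro subalg_q_commutator[OF scalar_embedding] subalg.gen, auto)

lemma screenings_preserve_Ue_minus:
  "\<forall>x\<in>Ue_minus sc e. S_e0 e k kinv x \<in> Ue_minus sc e \<and> tS_e0 e k kinv x \<in> Ue_minus sc e"
  unfolding tS_e0_eq_S_f0 Ue_minus_def
  by (rule screenings_preserve_subalg_e)
    (simp add: exchange_commutator_negative[where g = e, OF scalar_embedding e_exchange])

lemma screenings_preserve_Uf_plus:
  "\<forall>x\<in>Uf_plus sc f. S_f0 f k kinv x \<in> Uf_plus sc f \<and> tS_f0 f k kinv x \<in> Uf_plus sc f"
proof -
  have "\<forall>x\<in>Uf_plus sc f. S_e0 f kinv k x \<in> Uf_plus sc f \<and> S_f0 f k kinv x \<in> Uf_plus sc f"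
    unfolding Uf_plus_def
    by (rule screenings_preserve_subalg_f)
      (use exchange_commutator_positive[where g = f, OF scalar_embedding f_exchange] q2_nonzero in simp)
  then show ?thesis
    unfolding tS_f0_eq_S_e0 by blast
qed

lemma screenings_preserve_Uf_minus:
  "\<forall>x\<in>Uf_minus sc f. S_f0 f k kinv x \<in> Uf_minus sc f \<and> tS_f0 f k kinv x \<in> Uf_minus sc f"
proof -
  have "\<forall>x\<in>Uf_minus sc f. S_e0 f kinv k x \<in> Uf_minus sc f \<and> S_f0 f k kinv x \<in> Uf_minus sc f"
    unfolding Uf_minus_def
    by (rule screenings_preserve_subalg_f) (intro subalg_q_commutator[OF scalar_embedding] subalg.gen, auto)
  then show ?thesis
    unfolding tS_f0_eq_S_e0 by blast
qed

lemma screenings_commute_with_Ue_projections: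
  assumes iso: "mult_iso sc (Ue_minus sc e) (Ue_plus sc e) (Ue sc e)"
    and Pm: "is_proj_minus sc eps (Ue_minus sc e) (Ue_plus sc e) (Ue sc e) Pm"
    and Pp: "is_proj_plus sc eps (Ue_minus sc e) (Ue_plus sc e) (Ue sc e) Pp"
  shows "\<forall>x\<in>Ue sc e.
    Pm (S_e0 e k kinv x) = S_e0 e k kinv (Pm x) \<and> Pp (S_e0 e k kinv x) = S_e0 e k kinv (Pp x) \<and>
    Pm (tS_e0 e k kinv x) = tS_e0 e k kinv (Pm x) \<and> Pp (tS_e0 e k kinv x) = tS_e0 e k kinv (Pp x)"
proof -
  have conj_minus: "k * a * kinv \<in> Ue_minus sc e" if "a \<in> Ue_minus sc e" for a
    using subalg_conj_closed[OF scalar_embedding k_kinv kinv_k conj_e] that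
    unfolding Ue_minus_def .
  have conj_plus: "kinv * b * k \<in> Ue_plus sc e" if "b \<in> Ue_plus sc e" for b
    using subalg_conj_closed[OF scalar_embedding kinv_k k_kinv conj_inverse_e] that
    unfolding Ue_plus_def .
  show ?thesis
    using screenings_commute_with_projections[where g = e,
        OF scalar_embedding character k_kinv kinv_k eps_e0
        iso[unfolded Ue_def] Pm[unfolded Ue_def] Pp[unfolded Ue_def] conj_minus conj_plus
        screenings_preserve_Ue_minus[unfolded tS_e0_eq_S_f0]
        screenings_preserve_Ue_plus[unfolded tS_e0_eq_S_f0]]
    unfolding tS_e0_eq_S_f0 Ue_def .
qed

lemma screenings_commute_with_Uf_projections:
  assumes iso: "mult_iso sc (Uf_minus sc f) (Uf_plus sc f) (Uf sc f)"
    and Pm: "is_proj_minus sc eps (Uf_minus sc f) (Uf_plus sc f) (Uf sc f) Pm"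
    and Pp: "is_proj_plus sc eps (Uf_minus sc f) (Uf_plus sc f) (Uf sc f) Pp"
  shows "\<forall>x\<in>Uf sc f.
    Pm (S_f0 f k kinv x) = S_f0 f k kinv (Pm x) \<and> Pp (S_f0 f k kinv x) = S_f0 f k kinv (Pp x) \<and>
    Pm (tS_f0 f k kinv x) = tS_f0 f k kinv (Pm x) \<and> Pp (tS_f0 f k kinv x) = tS_f0 f k kinv (Pp x)"
proof -
  have conj_minus: "kinv * a * k \<in> Uf_minus sc f" if "a \<in> Uf_minus sc f" for a
    using subalg_conj_closed[OF scalar_embedding kinv_k k_kinv conj_inverse_f] that
    unfolding Uf_minus_def .
  have conj_plus: "k * b * kinv \<in> Uf_plus sc f" if "b \<in> Uf_plus sc f" for b
    using subalg_conj_closed[OF scalar_embedding k_kinv kinv_k conj_f] that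
    unfolding Uf_plus_def .
  have "\<forall>a\<in>Uf_minus sc f. S_e0 f kinv k a \<in> Uf_minus sc f \<and> S_f0 f k kinv a \<in> Uf_minus sc f"
    and "\<forall>b\<in>Uf_plus sc f. S_e0 f kinv k b \<in> Uf_plus sc f \<and> S_f0 f k kinv b \<in> Uf_plus sc f"
    using screenings_preserve_Uf_minus screenings_preserve_Uf_plus unfolding tS_f0_eq_S_e0 by blast+
  from screenings_commute_with_projections[where g = f,
      OF scalar_embedding character kinv_k k_kinv eps_f0
      iso[unfolded Uf_def] Pm[unfolded Uf_def] Pp[unfolded Uf_def] conj_minus conj_plus this]
  show ?thesis
    unfolding tS_f0_eq_S_e0 Uf_def by blast
qed

end

theorem mainTheorem6:
  fixes sc :: "'k::field_char_0 \<Rightarrow> 'a::ring_1"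
    and q :: 'k and e f :: "int \<Rightarrow> 'a" and k kinv :: 'a and eps :: "'a \<Rightarrow> 'k"
    and Pem Pep Pfm Pfp :: "'a \<Rightarrow> 'a"
  assumes U: "Uq_data sc q e f k kinv eps"
    and iso_e: "mult_iso sc (Ue_minus sc e) (Ue_plus sc e) (Ue sc e)"
    and iso_f: "mult_iso sc (Uf_minus sc f) (Uf_plus sc f) (Uf sc f)"
    and Pem: "is_proj_minus sc eps (Ue_minus sc e) (Ue_plus sc e) (Ue sc e) Pem"
    and Pep: "is_proj_plus sc eps (Ue_minus sc e) (Ue_plus sc e) (Ue sc e) Pep"
    and Pfm: "is_proj_minus sc eps (Uf_minus sc f) (Uf_plus sc f) (Uf sc f) Pfm"
    and Pfp: "is_proj_plus sc eps (Uf_minus sc f) (Uf_plus sc f) (Uf sc f) Pfp"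
  shows
    "(\<forall>x\<in>Ue_plus sc e. S_e0 e k kinv x \<in> Ue_plus sc e \<and> tS_e0 e k kinv x \<in> Ue_plus sc e) \<and>
     (\<forall>x\<in>Ue_minus sc e. S_e0 e k kinv x \<in> Ue_minus sc e \<and> tS_e0 e k kinv x \<in> Ue_minus sc e) \<and>
     (\<forall>x\<in>Uf_plus sc f. S_f0 f k kinv x \<in> Uf_plus sc f \<and> tS_f0 f k kinv x \<in> Uf_plus sc f) \<and>
     (\<forall>x\<in>Uf_minus sc f. S_f0 f k kinv x \<in> Uf_minus sc f \<and> tS_f0 f k kinv x \<in> Uf_minus sc f) \<and>
     (\<forall>x\<in>Ue sc e.
        Pem (S_e0 e k kinv x) = S_e0 e k kinv (Pem x) \<and>
        Pep (S_e0 e k kinv x) = S_e0 e k kinv (Pep x) \<and>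
        Pem (tS_e0 e k kinv x) = tS_e0 e k kinv (Pem x) \<and>
        Pep (tS_e0 e k kinv x) = tS_e0 e k kinv (Pep x)) \<and>
     (\<forall>x\<in>Uf sc f.
        Pfm (S_f0 f k kinv x) = S_f0 f k kinv (Pfm x) \<and>
        Pfp (S_f0 f k kinv x) = S_f0 f k kinv (Pfp x) \<and>
        Pfm (tS_f0 f k kinv x) = tS_f0 f k kinv (Pfm x) \<and>
        Pfp (tS_f0 f k kinv x) = tS_f0 f k kinv (Pfp x))"
proof -
  interpret Uq_screening sc q e f k kinv eps
    by (rule Uq_screening.intro) (rule U)
  show ?thesis
    using screenings_preserve_Ue_plus screenings_preserve_Ue_minus
      screenings_preserve_Uf_plus screenings_preserve_Uf_minus
      screenings_commute_with_Ue_projections[OF iso_e Pem Pep]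
      screenings_commute_with_Uf_projections[OF iso_f Pfm Pfp]
    by blast
qed

end
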